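(* The variety $\mathcal V$ is arithmetical (i.e. congruence permutable and congruence distributive) and regular.
   Context: $\mathcal V$ is the variety of algebras $(L,\vee,\wedge,{}',0,1)$ that are bounded lattices with a complementation $'$ (i.e. $x\vee x'\approx1$, $x\wedge x'\approx0$) satisfying the identities $x\vee y'\approx y'\vee\big((x\vee y')\wedge y\big)$ and $x\wedge y\approx x\wedge\big((x\wedge y)\vee x'\big)$. An algebra is congruence permutable if $\Theta\circ\Phi=\Phi\circ\Theta$ for all congruences $\Theta,\Phi$; congruence distributive if its congruence lattice is distributive; regular if any two congruences having a common class coincide. A variety has such a property if all its members do. *)

theory Defs
  imports Main
begin

record 'a lcalg =
  carrier :: "'a set"
  join :: "'a \<Rightarrow> 'a \<Rightarrow> 'a"
  meet :: "'a \<Rightarrow> 'a \<Rightarrow> 'a"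
  cmpl :: "'a \<Rightarrow> 'a"
  zero :: 'a
  one :: 'a

definition is_algebra :: "'a lcalg \<Rightarrow> bool" where
  "is_algebra L \<longleftrightarrow>
     (\<forall>x\<in>carrier L. \<forall>y\<in>carrier L. join L x y \<in> carrier L \<and> meet L x y \<in> carrier L) \<and>
     (\<forall>x\<in>carrier L. cmpl L x \<in> carrier L) \<and>
     zero L \<in> carrier L \<and> one L \<in> carrier L"

definition bounded_lattice_alg :: "'a lcalg \<Rightarrow> bool" where
  "bounded_lattice_alg L \<longleftrightarrow> is_algebra L \<and>
     (\<forall>x\<in>carrier L. \<forall>y\<in>carrier L. \<forall>z\<in>carrier L.
        join L (join L x y) z = join L x (join L y z) \<and>
        meet L (meet L x y) z = meet L x (meet L y z)) \<and>
     (\<forall>x\<in>carrier L. \<forall>y\<in>carrier L.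
        join L x y = join L y x \<and> meet L x y = meet L y x \<and>
        join L x (meet L x y) = x \<and> meet L x (join L x y) = x) \<and>
     (\<forall>x\<in>carrier L. join L x (zero L) = x \<and> meet L x (one L) = x)"

definition in_V :: "'a lcalg \<Rightarrow> bool" where
  "in_V L \<longleftrightarrow> bounded_lattice_alg L \<and>
     (\<forall>x\<in>carrier L. join L x (cmpl L x) = one L \<and> meet L x (cmpl L x) = zero L) \<and>
     (\<forall>x\<in>carrier L. \<forall>y\<in>carrier L.
        join L x (cmpl L y) = join L (cmpl L y) (meet L (join L x (cmpl L y)) y) \<and>
        meet L x y = meet L x (join L (meet L x y) (cmpl L x)))"

definition congruence :: "'a lcalg \<Rightarrow> 'a rel \<Rightarrow> bool" where
  "congruence L \<Theta> \<longleftrightarrow> equiv (carrier L) \<Theta> \<and>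
     (\<forall>x y u v. (x, y) \<in> \<Theta> \<longrightarrow> (u, v) \<in> \<Theta> \<longrightarrow>
        (join L x u, join L y v) \<in> \<Theta> \<and> (meet L x u, meet L y v) \<in> \<Theta>) \<and>
     (\<forall>x y. (x, y) \<in> \<Theta> \<longrightarrow> (cmpl L x, cmpl L y) \<in> \<Theta>)"

definition cong_join :: "'a lcalg \<Rightarrow> 'a rel \<Rightarrow> 'a rel \<Rightarrow> 'a rel" where
  "cong_join L \<Theta> \<Phi> = \<Inter> {\<Psi>. congruence L \<Psi> \<and> \<Theta> \<union> \<Phi> \<subseteq> \<Psi>}"

definition cong_permutable :: "'a lcalg \<Rightarrow> bool" where
  "cong_permutable L \<longleftrightarrow>
     (\<forall>\<Theta> \<Phi>. congruence L \<Theta> \<longrightarrow> congruence L \<Phi> \<longrightarrow> \<Theta> O \<Phi> = \<Phi> O \<Theta>)"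

definition cong_distributive :: "'a lcalg \<Rightarrow> bool" where
  "cong_distributive L \<longleftrightarrow>
     (\<forall>\<Theta> \<Phi> \<Psi>. congruence L \<Theta> \<longrightarrow> congruence L \<Phi> \<longrightarrow> congruence L \<Psi> \<longrightarrow>
        \<Theta> \<inter> cong_join L \<Phi> \<Psi> = cong_join L (\<Theta> \<inter> \<Phi>) (\<Theta> \<inter> \<Psi>))"

definition cong_regular :: "'a lcalg \<Rightarrow> bool" where
  "cong_regular L \<longleftrightarrow>
     (\<forall>\<Theta> \<Phi>. congruence L \<Theta> \<longrightarrow> congruence L \<Phi> \<longrightarrow>
        (\<exists>a\<in>carrier L. \<Theta> `` {a} = \<Phi> `` {a}) \<longrightarrow> \<Theta> = \<Phi>)"

end

theory Submission
  imports Defs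
begin

text \<open>
  With \<open>d(x,y) = (x \<and> y) \<or> (x \<or> y)'\<close> one has \<open>d(x,x) = 1\<close>, and the second defining identity
  of \<open>\<V>\<close> gives \<open>(x \<or> y) \<and> d(x,y) = x \<and> y\<close>, so that \<open>x \<equiv> y\<close> modulo a congruence exactly
  when \<open>d(x,y) \<equiv> 1\<close>. Hence \<open>p(x,y,z) = (x \<and> d(y,z)) \<or> (z \<and> d(x,y))\<close> is a Mal'cev term,
  giving permutability; together with the lattice majority term
  \<open>(x \<and> y) \<or> (y \<and> z) \<or> (z \<and> x)\<close> it gives distributivity. For regularity, the class
  of \<open>1\<close> is determined by the class of any \<open>a\<close>, because \<open>u \<equiv> 1\<close> iff \<open>a \<and> u \<equiv> a\<close> and
  \<open>a \<or> u' \<equiv> a\<close>; and the class of \<open>1\<close> determines the congruence via \<open>d\<close>.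
\<close>

section \<open>Congruences of an algebra of type (2,2,1,0,0)\<close>

lemma congruence_field:
  "congruence L \<Theta> \<Longrightarrow> (x, y) \<in> \<Theta> \<Longrightarrow> x \<in> carrier L \<and> y \<in> carrier L"
  unfolding congruence_def equiv_def by blast

lemma congruence_refl: "congruence L \<Theta> \<Longrightarrow> x \<in> carrier L \<Longrightarrow> (x, x) \<in> \<Theta>"
  unfolding congruence_def equiv_def refl_on_def by blast

lemma congruence_sym: "congruence L \<Theta> \<Longrightarrow> (x, y) \<in> \<Theta> \<Longrightarrow> (y, x) \<in> \<Theta>"
  unfolding congruence_def equiv_def sym_def by blast

lemma congruence_trans:
  "congruence L \<Theta> \<Longrightarrow> (x, y) \<in> \<Theta> \<Longrightarrow> (y, z) \<in> \<Theta> \<Longrightarrow> (x, z) \<in> \<Theta>"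
  unfolding congruence_def equiv_def trans_def by blast

lemma congruence_join:
  "congruence L \<Theta> \<Longrightarrow> (x, y) \<in> \<Theta> \<Longrightarrow> (u, v) \<in> \<Theta> \<Longrightarrow> (join L x u, join L y v) \<in> \<Theta>"
  unfolding congruence_def by blast

lemma congruence_meet:
  "congruence L \<Theta> \<Longrightarrow> (x, y) \<in> \<Theta> \<Longrightarrow> (u, v) \<in> \<Theta> \<Longrightarrow> (meet L x u, meet L y v) \<in> \<Theta>"
  unfolding congruence_def by blast

lemma congruence_cmpl: "congruence L \<Theta> \<Longrightarrow> (x, y) \<in> \<Theta> \<Longrightarrow> (cmpl L x, cmpl L y) \<in> \<Theta>"
  unfolding congruence_def by blast

lemma congruenceI:
  assumes "equiv (carrier L) \<Theta>"
    and "\<And>x y u v. (x, y) \<in> \<Theta> \<Longrightarrow> (u, v) \<in> \<Theta> \<Longrightarrow> (join L x u, join L y v) \<in> \<Theta>"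
    and "\<And>x y u v. (x, y) \<in> \<Theta> \<Longrightarrow> (u, v) \<in> \<Theta> \<Longrightarrow> (meet L x u, meet L y v) \<in> \<Theta>"
    and "\<And>x y. (x, y) \<in> \<Theta> \<Longrightarrow> (cmpl L x, cmpl L y) \<in> \<Theta>"
  shows "congruence L \<Theta>"
  using assms unfolding congruence_def by blast

lemma equiv_Int: "equiv A r \<Longrightarrow> equiv A s \<Longrightarrow> equiv A (r \<inter> s)"
  unfolding equiv_def using refl_on_Int[of A r A s] sym_Int trans_Int by auto

lemma congruence_Int:
  assumes \<Theta>: "congruence L \<Theta>" and \<Phi>: "congruence L \<Phi>"
  shows "congruence L (\<Theta> \<inter> \<Phi>)"
proof (rule congruenceI)
  show "equiv (carrier L) (\<Theta> \<inter> \<Phi>)"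
    using \<Theta> \<Phi> equiv_Int unfolding congruence_def by blast
  show "(join L x u, join L y v) \<in> \<Theta> \<inter> \<Phi>"
    if "(x, y) \<in> \<Theta> \<inter> \<Phi>" "(u, v) \<in> \<Theta> \<inter> \<Phi>" for x y u v
    using that congruence_join[OF \<Theta>] congruence_join[OF \<Phi>] by simp
  show "(meet L x u, meet L y v) \<in> \<Theta> \<inter> \<Phi>"
    if "(x, y) \<in> \<Theta> \<inter> \<Phi>" "(u, v) \<in> \<Theta> \<inter> \<Phi>" for x y u v
    using that congruence_meet[OF \<Theta>] congruence_meet[OF \<Phi>] by simp
  show "(cmpl L x, cmpl L y) \<in> \<Theta> \<inter> \<Phi>" if "(x, y) \<in> \<Theta> \<inter> \<Phi>" for x y
    using that congruence_cmpl[OF \<Theta>] congruence_cmpl[OF \<Phi>] by simp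
qed

lemma congruence_relcomp:
  assumes \<Theta>: "congruence L \<Theta>" and \<Phi>: "congruence L \<Phi>" and perm: "\<Theta> O \<Phi> = \<Phi> O \<Theta>"
  shows "congruence L (\<Theta> O \<Phi>)"
proof (rule congruenceI)
  show "equiv (carrier L) (\<Theta> O \<Phi>)"
  proof (rule equivI)
    show "\<Theta> O \<Phi> \<subseteq> carrier L \<times> carrier L"
      using congruence_field[OF \<Theta>] congruence_field[OF \<Phi>] by blast
    show "refl_on (carrier L) (\<Theta> O \<Phi>)"
      by (rule refl_onI) (use congruence_refl[OF \<Theta>] congruence_refl[OF \<Phi>] in blast)
    show "sym (\<Theta> O \<Phi>)"
    proof (rule symI)
      fix a b assume "(a, b) \<in> \<Theta> O \<Phi>"
      then have "(b, a) \<in> \<Phi> O \<Theta>" using congruence_sym[OF \<Theta>] congruence_sym[OF \<Phi>] by blast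
      then show "(b, a) \<in> \<Theta> O \<Phi>" using perm by simp
    qed
    have "(\<Theta> O \<Phi>) O (\<Theta> O \<Phi>) = \<Theta> O (\<Phi> O \<Theta>) O \<Phi>" by (simp add: O_assoc)
    also have "\<dots> = \<Theta> O (\<Theta> O \<Phi>) O \<Phi>" by (simp only: perm)
    also have "\<dots> \<subseteq> \<Theta> O \<Phi>"
      using congruence_trans[OF \<Theta>] congruence_trans[OF \<Phi>] by blast
    finally show "trans (\<Theta> O \<Phi>)" unfolding trans_def by blast
  qed
  have compatible: "(f x u, f y v) \<in> \<Theta> O \<Phi>"
    if f: "\<And>\<Psi> x y u v. congruence L \<Psi> \<Longrightarrow> (x, y) \<in> \<Psi> \<Longrightarrow> (u, v) \<in> \<Psi> \<Longrightarrow> (f x u, f y v) \<in> \<Psi>"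
      and xy: "(x, y) \<in> \<Theta> O \<Phi>" and uv: "(u, v) \<in> \<Theta> O \<Phi>" for f x y u v
  proof -
    obtain a b where "(x, a) \<in> \<Theta>" "(a, y) \<in> \<Phi>" "(u, b) \<in> \<Theta>" "(b, v) \<in> \<Phi>"
      using xy uv by blast
    then have "(f x u, f a b) \<in> \<Theta>" "(f a b, f y v) \<in> \<Phi>" using f \<Theta> \<Phi> by blast+
    then show ?thesis by blast
  qed
  show "(join L x u, join L y v) \<in> \<Theta> O \<Phi>"
    if "(x, y) \<in> \<Theta> O \<Phi>" "(u, v) \<in> \<Theta> O \<Phi>" for x y u v
    using compatible[OF congruence_join that] .
  show "(meet L x u, meet L y v) \<in> \<Theta> O \<Phi>"
    if "(x, y) \<in> \<Theta> O \<Phi>" "(u, v) \<in> \<Theta> O \<Phi>" for x y u v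
    using compatible[OF congruence_meet that] .
  show "(cmpl L x, cmpl L y) \<in> \<Theta> O \<Phi>" if "(x, y) \<in> \<Theta> O \<Phi>" for x y
    using that congruence_cmpl[OF \<Theta>] congruence_cmpl[OF \<Phi>] by blast
qed

lemma cong_join_least: "congruence L \<Psi> \<Longrightarrow> \<Theta> \<union> \<Phi> \<subseteq> \<Psi> \<Longrightarrow> cong_join L \<Theta> \<Phi> \<subseteq> \<Psi>"
  unfolding cong_join_def by (rule Inter_lower) simp

lemma relcomp_subset_cong_join: "\<Theta> O \<Phi> \<subseteq> cong_join L \<Theta> \<Phi>"
  unfolding cong_join_def
proof (rule Inter_greatest)
  fix \<Psi> assume "\<Psi> \<in> {\<Psi>. congruence L \<Psi> \<and> \<Theta> \<union> \<Phi> \<subseteq> \<Psi>}"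
  then have "congruence L \<Psi>" "\<Theta> O \<Phi> \<subseteq> \<Psi> O \<Psi>" by blast+
  then show "\<Theta> O \<Phi> \<subseteq> \<Psi>" using congruence_trans[of L \<Psi>] by blast
qed

lemma cong_join_eq_relcomp:
  assumes \<Theta>: "congruence L \<Theta>" and \<Phi>: "congruence L \<Phi>" and perm: "\<Theta> O \<Phi> = \<Phi> O \<Theta>"
  shows "cong_join L \<Theta> \<Phi> = \<Theta> O \<Phi>"
proof
  have "\<Theta> \<union> \<Phi> \<subseteq> \<Theta> O \<Phi>"
  proof clarify
    fix x y assume "(x, y) \<in> \<Theta> \<union> \<Phi>"
    then have "x \<in> carrier L" "y \<in> carrier L"
      using congruence_field[OF \<Theta>] congruence_field[OF \<Phi>] by blast+
    then have "(x, x) \<in> \<Theta>" "(y, y) \<in> \<Phi>"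
      using congruence_refl[OF \<Theta>] congruence_refl[OF \<Phi>] by blast+
    with \<open>(x, y) \<in> \<Theta> \<union> \<Phi>\<close> show "(x, y) \<in> \<Theta> O \<Phi>" by blast
  qed
  then show "cong_join L \<Theta> \<Phi> \<subseteq> \<Theta> O \<Phi>"
    by (rule cong_join_least[OF congruence_relcomp[OF assms]])
qed (rule relcomp_subset_cong_join)

definition compatible_ternary :: "'a lcalg \<Rightarrow> ('a \<Rightarrow> 'a \<Rightarrow> 'a \<Rightarrow> 'a) \<Rightarrow> bool" where
  "compatible_ternary L f \<longleftrightarrow>
     (\<forall>\<Theta> x x' y y' z z'. congruence L \<Theta> \<longrightarrow> (x, x') \<in> \<Theta> \<longrightarrow> (y, y') \<in> \<Theta> \<longrightarrow>
        (z, z') \<in> \<Theta> \<longrightarrow> (f x y z, f x' y' z') \<in> \<Theta>)"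

lemma compatible_ternaryD:
  "compatible_ternary L f \<Longrightarrow> congruence L \<Theta> \<Longrightarrow> (x, x') \<in> \<Theta> \<Longrightarrow> (y, y') \<in> \<Theta> \<Longrightarrow>
    (z, z') \<in> \<Theta> \<Longrightarrow> (f x y z, f x' y' z') \<in> \<Theta>"
  unfolding compatible_ternary_def by blast

lemma maltsev_term_imp_cong_permutable:
  assumes p: "compatible_ternary L p"
    and p_id: "\<And>x y. x \<in> carrier L \<Longrightarrow> y \<in> carrier L \<Longrightarrow> p x y y = x \<and> p x x y = y"
  shows "cong_permutable L"
proof -
  have "\<Theta> O \<Phi> \<subseteq> \<Phi> O \<Theta>" if \<Theta>: "congruence L \<Theta>" and \<Phi>: "congruence L \<Phi>" for \<Theta> \<Phi>
  proof
    fix q assume "q \<in> \<Theta> O \<Phi>"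
    then obtain x y z where q: "q = (x, z)" and xy: "(x, y) \<in> \<Theta>" and yz: "(y, z) \<in> \<Phi>" by blast
    have x: "x \<in> carrier L" and y: "y \<in> carrier L" and z: "z \<in> carrier L"
      using congruence_field[OF \<Theta> xy] congruence_field[OF \<Phi> yz] by auto
    have "(p x y z, p x z z) \<in> \<Phi>"
      using compatible_ternaryD[OF p \<Phi> congruence_refl[OF \<Phi> x] yz congruence_refl[OF \<Phi> z]] .
    then have "(x, p x y z) \<in> \<Phi>" using p_id[OF x z] congruence_sym[OF \<Phi>] by simp
    moreover have "(p x y z, p y y z) \<in> \<Theta>"
      using compatible_ternaryD[OF p \<Theta> xy congruence_refl[OF \<Theta> y] congruence_refl[OF \<Theta> z]] .
    then have "(p x y z, z) \<in> \<Theta>" using p_id[OF y z] by simp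
    ultimately show "q \<in> \<Phi> O \<Theta>" using q by blast
  qed
  then show ?thesis unfolding cong_permutable_def by blast
qed

lemma majority_term_imp_cong_distributive:
  assumes perm: "cong_permutable L" and m: "compatible_ternary L m"
    and m_id: "\<And>x y. x \<in> carrier L \<Longrightarrow> y \<in> carrier L \<Longrightarrow>
      m x x y = x \<and> m x y x = x \<and> m y x x = x"
  shows "cong_distributive L"
  unfolding cong_distributive_def
proof (intro allI impI)
  fix \<Theta> \<Phi> \<Psi>
  assume \<Theta>: "congruence L \<Theta>" and \<Phi>: "congruence L \<Phi>" and \<Psi>: "congruence L \<Psi>"
  have "\<Theta> \<inter> (\<Phi> O \<Psi>) \<subseteq> (\<Theta> \<inter> \<Phi>) O (\<Theta> \<inter> \<Psi>)"
  proof
    fix q assume "q \<in> \<Theta> \<inter> (\<Phi> O \<Psi>)"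
    then obtain x y z where q: "q = (x, z)" and xz: "(x, z) \<in> \<Theta>"
      and xy: "(x, y) \<in> \<Phi>" and yz: "(y, z) \<in> \<Psi>"
      by blast
    have x: "x \<in> carrier L" and y: "y \<in> carrier L" and z: "z \<in> carrier L"
      using congruence_field[OF \<Phi> xy] congruence_field[OF \<Psi> yz] by auto
    let ?w = "m x y z"
    have "(m x x z, ?w) \<in> \<Phi>"
      using compatible_ternaryD[OF m \<Phi> congruence_refl[OF \<Phi> x] xy congruence_refl[OF \<Phi> z]] .
    then have x_w_\<Phi>: "(x, ?w) \<in> \<Phi>" using m_id[OF x z] by simp
    have "(m x y x, ?w) \<in> \<Theta>"
      using compatible_ternaryD[OF m \<Theta> congruence_refl[OF \<Theta> x] congruence_refl[OF \<Theta> y] xz] .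
    then have x_w_\<Theta>: "(x, ?w) \<in> \<Theta>" using m_id[OF x y] by simp
    have "(?w, m x z z) \<in> \<Psi>"
      using compatible_ternaryD[OF m \<Psi> congruence_refl[OF \<Psi> x] yz congruence_refl[OF \<Psi> z]] .
    then have w_z_\<Psi>: "(?w, z) \<in> \<Psi>" using m_id[OF z x] by simp
    have "(?w, m z y z) \<in> \<Theta>"
      using compatible_ternaryD[OF m \<Theta> xz congruence_refl[OF \<Theta> y] congruence_refl[OF \<Theta> z]] .
    then have w_z_\<Theta>: "(?w, z) \<in> \<Theta>" using m_id[OF z y] by simp
    show "q \<in> (\<Theta> \<inter> \<Phi>) O (\<Theta> \<inter> \<Psi>)" using x_w_\<Phi> x_w_\<Theta> w_z_\<Psi> w_z_\<Theta> q by blast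
  qed
  moreover have "(\<Theta> \<inter> \<Phi>) O (\<Theta> \<inter> \<Psi>) \<subseteq> \<Theta> \<inter> (\<Phi> O \<Psi>)"
    using congruence_trans[OF \<Theta>] by blast
  moreover have "cong_join L \<Phi> \<Psi> = \<Phi> O \<Psi>"
    using cong_join_eq_relcomp \<Phi> \<Psi> perm unfolding cong_permutable_def by blast
  moreover have "cong_join L (\<Theta> \<inter> \<Phi>) (\<Theta> \<inter> \<Psi>) = (\<Theta> \<inter> \<Phi>) O (\<Theta> \<inter> \<Psi>)"
    using cong_join_eq_relcomp congruence_Int \<Theta> \<Phi> \<Psi> perm unfolding cong_permutable_def
    by meson
  ultimately show "\<Theta> \<inter> cong_join L \<Phi> \<Psi> = cong_join L (\<Theta> \<inter> \<Phi>) (\<Theta> \<inter> \<Psi>)" by blast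
qed

section \<open>Bounded lattices with a complementation\<close>

definition majority :: "'a lcalg \<Rightarrow> 'a \<Rightarrow> 'a \<Rightarrow> 'a \<Rightarrow> 'a" where
  "majority L x y z = join L (join L (meet L x y) (meet L y z)) (meet L z x)"

text \<open>In a Boolean algebra \<open>bicond L x y\<close> is the biconditional \<open>x \<leftrightarrow> y\<close>.\<close>

definition bicond :: "'a lcalg \<Rightarrow> 'a \<Rightarrow> 'a \<Rightarrow> 'a" where
  "bicond L x y = join L (meet L x y) (cmpl L (join L x y))"

definition maltsev :: "'a lcalg \<Rightarrow> 'a \<Rightarrow> 'a \<Rightarrow> 'a \<Rightarrow> 'a" where
  "maltsev L x y z = join L (meet L x (bicond L y z)) (meet L z (bicond L x y))"

lemma congruence_bicond:
  "congruence L \<Theta> \<Longrightarrow> (x, x') \<in> \<Theta> \<Longrightarrow> (y, y') \<in> \<Theta> \<Longrightarrow> (bicond L x y, bicond L x' y') \<in> \<Theta>"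
  unfolding bicond_def by (intro congruence_join congruence_meet congruence_cmpl)

lemma compatible_maltsev: "compatible_ternary L (maltsev L)"
  unfolding compatible_ternary_def maltsev_def
  by (blast intro: congruence_join congruence_meet congruence_bicond)

lemma compatible_majority: "compatible_ternary L (majority L)"
  unfolding compatible_ternary_def majority_def
  by (blast intro: congruence_join congruence_meet)

locale bounded_lattice_algebra =
  fixes L :: "'a lcalg"
  assumes bounded_lattice: "bounded_lattice_alg L"
begin

abbreviation ljoin :: "'a \<Rightarrow> 'a \<Rightarrow> 'a" (infixl "\<squnion>" 65) where "x \<squnion> y \<equiv> join L x y"
abbreviation lmeet :: "'a \<Rightarrow> 'a \<Rightarrow> 'a" (infixl "\<sqinter>" 70) where "x \<sqinter> y \<equiv> meet L x y"
abbreviation lcmpl :: "'a \<Rightarrow> 'a" ("_\<^sup>c" [1000] 999) where "x\<^sup>c \<equiv> cmpl L x"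
abbreviation lzero :: 'a ("\<zero>") where "\<zero> \<equiv> zero L"
abbreviation lone :: 'a ("\<one>") where "\<one> \<equiv> one L"

lemma join_closed [simp]: "x \<in> carrier L \<Longrightarrow> y \<in> carrier L \<Longrightarrow> x \<squnion> y \<in> carrier L"
  and meet_closed [simp]: "x \<in> carrier L \<Longrightarrow> y \<in> carrier L \<Longrightarrow> x \<sqinter> y \<in> carrier L"
  and cmpl_closed [simp]: "x \<in> carrier L \<Longrightarrow> x\<^sup>c \<in> carrier L"
  and zero_closed [simp]: "\<zero> \<in> carrier L"
  and one_closed [simp]: "\<one> \<in> carrier L"
  using bounded_lattice unfolding bounded_lattice_alg_def is_algebra_def by blast+

lemma bicond_closed [simp]: "x \<in> carrier L \<Longrightarrow> y \<in> carrier L \<Longrightarrow> bicond L x y \<in> carrier L"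
  unfolding bicond_def by simp

lemma join_assoc: "x \<in> carrier L \<Longrightarrow> y \<in> carrier L \<Longrightarrow> z \<in> carrier L \<Longrightarrow> x \<squnion> y \<squnion> z = x \<squnion> (y \<squnion> z)"
  and meet_assoc: "x \<in> carrier L \<Longrightarrow> y \<in> carrier L \<Longrightarrow> z \<in> carrier L \<Longrightarrow> x \<sqinter> y \<sqinter> z = x \<sqinter> (y \<sqinter> z)"
  and join_comm: "x \<in> carrier L \<Longrightarrow> y \<in> carrier L \<Longrightarrow> x \<squnion> y = y \<squnion> x"
  and meet_comm: "x \<in> carrier L \<Longrightarrow> y \<in> carrier L \<Longrightarrow> x \<sqinter> y = y \<sqinter> x"
  and join_meet_absorb: "x \<in> carrier L \<Longrightarrow> y \<in> carrier L \<Longrightarrow> x \<squnion> (x \<sqinter> y) = x"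
  and meet_join_absorb: "x \<in> carrier L \<Longrightarrow> y \<in> carrier L \<Longrightarrow> x \<sqinter> (x \<squnion> y) = x"
  and join_zero: "x \<in> carrier L \<Longrightarrow> x \<squnion> \<zero> = x"
  and meet_one: "x \<in> carrier L \<Longrightarrow> x \<sqinter> \<one> = x"
  using bounded_lattice unfolding bounded_lattice_alg_def by blast+

lemma meet_idem: "x \<in> carrier L \<Longrightarrow> x \<sqinter> x = x"
  using meet_join_absorb[of x "x \<sqinter> x"] by (simp add: join_meet_absorb)

lemma join_idem: "x \<in> carrier L \<Longrightarrow> x \<squnion> x = x"
  using join_meet_absorb[of x "x \<squnion> x"] by (simp add: meet_join_absorb)

lemma meet_meet_left: "x \<in> carrier L \<Longrightarrow> y \<in> carrier L \<Longrightarrow> x \<sqinter> (x \<sqinter> y) = x \<sqinter> y"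
  by (simp add: meet_assoc[symmetric] meet_idem)

lemma meet_meet_right: "x \<in> carrier L \<Longrightarrow> y \<in> carrier L \<Longrightarrow> y \<sqinter> (x \<sqinter> y) = x \<sqinter> y"
  by (metis meet_comm meet_meet_left)

lemma meet_join_meet: "x \<in> carrier L \<Longrightarrow> y \<in> carrier L \<Longrightarrow> (x \<squnion> y) \<sqinter> (x \<sqinter> y) = x \<sqinter> y"
  by (metis meet_assoc meet_comm meet_join_absorb join_closed meet_closed)

lemma majority_eqs:
  assumes "x \<in> carrier L" "y \<in> carrier L"
  shows "majority L x x y = x \<and> majority L x y x = x \<and> majority L y x x = x"
  using assms unfolding majority_def
  by (simp add: meet_idem join_idem join_meet_absorb meet_comm join_comm join_assoc[symmetric])

end

locale complemented_lattice_algebra = bounded_lattice_algebra +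
  assumes join_cmpl: "x \<in> carrier L \<Longrightarrow> x \<squnion> x\<^sup>c = \<one>"
    and meet_cmpl: "x \<in> carrier L \<Longrightarrow> x \<sqinter> x\<^sup>c = \<zero>"
begin

lemma cmpl_one: "\<one>\<^sup>c = \<zero>"
  using meet_one[of "\<one>\<^sup>c"] meet_comm[of "\<one>\<^sup>c" \<one>] meet_cmpl[of \<one>] by simp

lemma meet_zero: "x \<in> carrier L \<Longrightarrow> x \<sqinter> \<zero> = \<zero>"
  using meet_assoc[of x x "x\<^sup>c"] by (simp add: meet_cmpl meet_idem)

lemma bicond_self: "x \<in> carrier L \<Longrightarrow> bicond L x x = \<one>"
  unfolding bicond_def by (simp add: meet_idem join_idem join_cmpl)

lemma congruence_one_iff:
  assumes \<Theta>: "congruence L \<Theta>" and a: "a \<in> carrier L" and u: "u \<in> carrier L"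
  shows "(u, \<one>) \<in> \<Theta> \<longleftrightarrow> (a \<sqinter> u, a) \<in> \<Theta> \<and> (a \<squnion> u\<^sup>c, a) \<in> \<Theta>"
proof
  assume u1: "(u, \<one>) \<in> \<Theta>"
  have "(a \<sqinter> u, a \<sqinter> \<one>) \<in> \<Theta>" "(a \<squnion> u\<^sup>c, a \<squnion> \<one>\<^sup>c) \<in> \<Theta>"
    using congruence_refl[OF \<Theta> a] u1 congruence_meet[OF \<Theta>] congruence_join[OF \<Theta>]
      congruence_cmpl[OF \<Theta>] by blast+
  then show "(a \<sqinter> u, a) \<in> \<Theta> \<and> (a \<squnion> u\<^sup>c, a) \<in> \<Theta>"
    using a by (simp add: meet_one cmpl_one join_zero)
next
  assume "(a \<sqinter> u, a) \<in> \<Theta> \<and> (a \<squnion> u\<^sup>c, a) \<in> \<Theta>"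
  then have au: "(a, a \<sqinter> u) \<in> \<Theta>" and auc: "(a \<squnion> u\<^sup>c, a) \<in> \<Theta>"
    using congruence_sym[OF \<Theta>] by blast+
  have uc: "u\<^sup>c \<in> carrier L" using u by simp
  have "u\<^sup>c = u\<^sup>c \<sqinter> (a \<squnion> u\<^sup>c)"
    using meet_join_absorb[OF uc a] join_comm[OF a uc] by simp
  moreover have "(u\<^sup>c \<sqinter> (a \<squnion> u\<^sup>c), u\<^sup>c \<sqinter> (a \<sqinter> u)) \<in> \<Theta>"
    using congruence_refl[OF \<Theta> uc] congruence_meet[OF \<Theta>] congruence_trans[OF \<Theta> auc au]
    by blast
  moreover have "u\<^sup>c \<sqinter> (a \<sqinter> u) = a \<sqinter> (u \<sqinter> u\<^sup>c)"
    using meet_comm[of "u\<^sup>c" "a \<sqinter> u"] meet_assoc[OF a u uc] a u by simp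
  then have "u\<^sup>c \<sqinter> (a \<sqinter> u) = \<zero>"
    using a u by (simp add: meet_cmpl meet_zero)
  ultimately have "(u\<^sup>c, \<zero>) \<in> \<Theta>" by simp
  then have "(u \<squnion> u\<^sup>c, u \<squnion> \<zero>) \<in> \<Theta>"
    using congruence_refl[OF \<Theta> u] congruence_join[OF \<Theta>] by blast
  then show "(u, \<one>) \<in> \<Theta>"
    using u congruence_sym[OF \<Theta>] by (simp add: join_cmpl join_zero)
qed

end

locale V_algebra = complemented_lattice_algebra +
  assumes meet_eq_meet_join_cmpl:
    "x \<in> carrier L \<Longrightarrow> y \<in> carrier L \<Longrightarrow> x \<sqinter> y = x \<sqinter> ((x \<sqinter> y) \<squnion> x\<^sup>c)"
begin

lemma join_meet_bicond:
  assumes "x \<in> carrier L" "y \<in> carrier L"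
  shows "(x \<squnion> y) \<sqinter> bicond L x y = x \<sqinter> y"
  using meet_eq_meet_join_cmpl[of "x \<squnion> y" "x \<sqinter> y"] assms
  unfolding bicond_def by (simp add: meet_join_meet)

lemma meet_bicond:
  assumes x: "x \<in> carrier L" and y: "y \<in> carrier L"
  shows "x \<sqinter> bicond L x y = x \<sqinter> y"
proof -
  have "x \<sqinter> bicond L x y = x \<sqinter> ((x \<squnion> y) \<sqinter> bicond L x y)"
    using x y by (simp add: meet_join_absorb meet_assoc[symmetric])
  also have "\<dots> = x \<sqinter> y"
    using x y by (simp add: join_meet_bicond meet_meet_left)
  finally show ?thesis .
qed

lemma bicond_comm: "x \<in> carrier L \<Longrightarrow> y \<in> carrier L \<Longrightarrow> bicond L x y = bicond L y x"
  unfolding bicond_def by (simp add: meet_comm join_comm)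

lemma meet_bicond_right: "x \<in> carrier L \<Longrightarrow> y \<in> carrier L \<Longrightarrow> y \<sqinter> bicond L x y = x \<sqinter> y"
  using meet_bicond[of y x] by (simp add: bicond_comm meet_comm)

lemma maltsev_eqs:
  assumes x: "x \<in> carrier L" and y: "y \<in> carrier L"
  shows "maltsev L x y y = x \<and> maltsev L x x y = y"
proof
  have "maltsev L x y y = x \<squnion> (x \<sqinter> y)"
    unfolding maltsev_def using x y by (simp add: bicond_self meet_one meet_bicond_right)
  then show "maltsev L x y y = x" using x y by (simp add: join_meet_absorb)
  have "maltsev L x x y = (x \<sqinter> y) \<squnion> y"
    unfolding maltsev_def using x y by (simp add: bicond_self meet_one meet_bicond)
  also have "\<dots> = y \<squnion> (y \<sqinter> x)"
    using x y join_comm[of "x \<sqinter> y" y] meet_comm[of x y] by (metis meet_closed)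
  finally show "maltsev L x x y = y" using x y by (simp add: join_meet_absorb)
qed

lemma congruence_iff_bicond_one:
  assumes \<Theta>: "congruence L \<Theta>" and x: "x \<in> carrier L" and y: "y \<in> carrier L"
  shows "(x, y) \<in> \<Theta> \<longleftrightarrow> (bicond L x y, \<one>) \<in> \<Theta>"
proof
  assume "(x, y) \<in> \<Theta>"
  then have "(bicond L x y, bicond L x x) \<in> \<Theta>"
    using congruence_bicond[OF \<Theta> congruence_refl[OF \<Theta> x]] congruence_sym[OF \<Theta>] by blast
  then show "(bicond L x y, \<one>) \<in> \<Theta>" using bicond_self[OF x] by simp
next
  assume "(bicond L x y, \<one>) \<in> \<Theta>"
  then have "((x \<squnion> y) \<sqinter> bicond L x y, (x \<squnion> y) \<sqinter> \<one>) \<in> \<Theta>"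
    using congruence_meet[OF \<Theta> congruence_refl[OF \<Theta>]] x y by simp
  then have meet_join: "(x \<sqinter> y, x \<squnion> y) \<in> \<Theta>"
    using x y by (simp add: join_meet_bicond meet_one)
  have "(z \<sqinter> (x \<squnion> y), z \<sqinter> (x \<sqinter> y)) \<in> \<Theta>" if "z \<in> carrier L" for z
    using congruence_meet[OF \<Theta> congruence_refl[OF \<Theta> that] congruence_sym[OF \<Theta> meet_join]] .
  then have "(x, x \<sqinter> y) \<in> \<Theta>" "(y, x \<sqinter> y) \<in> \<Theta>"
    using x y meet_join_absorb[OF x y] meet_join_absorb[OF y x] join_comm[OF x y]
      meet_meet_left[OF x y] meet_meet_right[OF x y] by fastforce+
  then show "(x, y) \<in> \<Theta>"
    using congruence_sym[OF \<Theta>] congruence_trans[OF \<Theta>] by blast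
qed

lemma congruence_subset_of_class_eq:
  assumes \<Theta>: "congruence L \<Theta>" and \<Phi>: "congruence L \<Phi>"
    and a: "a \<in> carrier L" and class_eq: "\<Theta> `` {a} = \<Phi> `` {a}"
  shows "\<Theta> \<subseteq> \<Phi>"
proof clarify
  fix x y assume xy: "(x, y) \<in> \<Theta>"
  have x: "x \<in> carrier L" and y: "y \<in> carrier L" using congruence_field[OF \<Theta> xy] by auto
  define u where "u = bicond L x y"
  have u: "u \<in> carrier L" unfolding u_def using x y by simp
  have "(a \<sqinter> u, a) \<in> \<Theta> \<and> (a \<squnion> u\<^sup>c, a) \<in> \<Theta>"
    using xy congruence_iff_bicond_one[OF \<Theta> x y] congruence_one_iff[OF \<Theta> a u] u_def by simp
  then have "(a \<sqinter> u, a) \<in> \<Phi> \<and> (a \<squnion> u\<^sup>c, a) \<in> \<Phi>"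
    using class_eq congruence_sym[OF \<Theta>] congruence_sym[OF \<Phi>] by blast
  then show "(x, y) \<in> \<Phi>"
    using congruence_iff_bicond_one[OF \<Phi> x y] congruence_one_iff[OF \<Phi> a u] u_def by simp
qed

end

lemma in_V_imp_V_algebra: "in_V L \<Longrightarrow> V_algebra L"
  unfolding in_V_def V_algebra_def V_algebra_axioms_def complemented_lattice_algebra_def
    complemented_lattice_algebra_axioms_def bounded_lattice_algebra_def
  by blast

theorem theorem2:
  fixes L :: "'a lcalg"
  assumes "in_V L"
  shows "cong_permutable L \<and> cong_distributive L \<and> cong_regular L"
proof -
  interpret V_algebra L using in_V_imp_V_algebra[OF assms] .
  have perm: "cong_permutable L"
    using maltsev_term_imp_cong_permutable[OF compatible_maltsev] maltsev_eqs by blast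
  moreover have "cong_distributive L"
    using majority_term_imp_cong_distributive[OF perm compatible_majority] majority_eqs by blast
  moreover have "cong_regular L"
    unfolding cong_regular_def using congruence_subset_of_class_eq by blast
  ultimately show ?thesis by blast
qed

end
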